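(* Let $(G,L_G)$ be a labeled graph presenting a sofic shift $Y=L_G(X_G)$. Then the future cover $(\mathbb K(Y),L_{\mathbb K(Y)})$ of $Y$ is isomorphic, as a labeled graph, to the merged graph $([\underline{G}],L_{[\underline{G}]})$ of $(\underline{G},L_{\underline{G}})$, via the map $F(y)\mapsto f_{\underline{G}}(D^y)$ on vertices.
   Context: A labeled graph $(G,L_G)$: finite directed graph (vertices $V_G$, edges $E_G$, source/terminal maps $s_G,t_G$) without sinks or sources, labeling $L_G:E_G\to A$, edge shift $X_G$, presenting $Y=L_G(X_G)$. For a labeled graph $(H,L_H)$ and vertex $v$, $f_H(v)=\{L_H(x): x$ a right-infinite path starting at $v\}$. Construction of $\underline{G}$: for a non-empty $D\subseteq V_G$ and $a\in A$ let $[D,a]=\{t_G(e): e\in E_G, s_G(e)\in D, L_G(e)=a\}$. For $y\in Y$ let $D^y$ be the set of terminal vertices of left-infinite paths $x=\cdots x_{-2}x_{-1}$ in $G$ with $L_G(x)=y_{(-\infty,-1]}$. The labeled graph $(\underline{G},L_{\underline{G}})$ has vertex set $\{D^y: y\in Y\}$, and for each vertex $D$ and each $a\in A$ with $[D,a]\neq\emptyset$ one edge $(D,a)$ from $D$ to $[D,a]$ labeled $a$. Merged graph of a labeled graph $(H,L_H)$: vertices are the distinct sets $f_H(v)$, $v\in V_H$; there is an edge labeled $a$ from $f_H(v)$ to $f_H(w)$ when there are vertices $v',w'$ with $f_H(v')=f_H(v)$, $f_H(w')=f_H(w)$ and an edge labeled $a$ from $v'$ to $w'$ in $H$ (one edge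 per such pair and label). Future cover: for $y\in Y$ let $F(y)=\{w\in Y[0,\infty): y_{(-\infty,-1]}w\in Y\}$ with $Y[0,\infty)=\{y_{[0,\infty)}:y\in Y\}$; $(\mathbb K(Y),L_{\mathbb K(Y)})$ has vertices the distinct sets $F(y)$ and an edge labeled $a$ from $F(y)$ to $F(z)$ exactly when $F(z)=\{w\in A^{\mathbb N}: aw\in F(y)\}$ (one edge per such pair and label). *)

theory Defs
  imports Main
begin

definition edge_shift :: "'e set \<Rightarrow> ('e \<Rightarrow> 'v) \<Rightarrow> ('e \<Rightarrow> 'v) \<Rightarrow> (int \<Rightarrow> 'e) set" where
  "edge_shift E s t = {x. (\<forall>i. x i \<in> E) \<and> (\<forall>i. t (x i) = s (x (i + 1)))}"

definition presented_shift ::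
  "'e set \<Rightarrow> ('e \<Rightarrow> 'v) \<Rightarrow> ('e \<Rightarrow> 'v) \<Rightarrow> ('e \<Rightarrow> 'a) \<Rightarrow> (int \<Rightarrow> 'a) set" where
  "presented_shift E s t L = {L \<circ> x | x. x \<in> edge_shift E s t}"

definition follower ::
  "'e set \<Rightarrow> ('e \<Rightarrow> 'v) \<Rightarrow> ('e \<Rightarrow> 'v) \<Rightarrow> ('e \<Rightarrow> 'a) \<Rightarrow> 'v set \<Rightarrow> 'a \<Rightarrow> 'v set" where
  "follower E s t L D a = {t e | e. e \<in> E \<and> s e \<in> D \<and> L e = a}"

text \<open>D^y: terminal vertices of left-infinite paths labeled y_(-inf,-1].
 A left-infinite path ... x_(-2) x_(-1) is encoded as x :: nat => 'e with x n = x_(-(n+1)).\<close>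
definition past_set ::
  "'e set \<Rightarrow> ('e \<Rightarrow> 'v) \<Rightarrow> ('e \<Rightarrow> 'v) \<Rightarrow> ('e \<Rightarrow> 'a) \<Rightarrow> (int \<Rightarrow> 'a) \<Rightarrow> 'v set" where
  "past_set E s t L y = {t (x 0) | x. (\<forall>n. x n \<in> E) \<and> (\<forall>n. t (x (Suc n)) = s (x n))
      \<and> (\<forall>n. L (x n) = y (- int n - 1))}"

text \<open>The labeled graph underline G; since it has at most one edge per
 (source, label, target), it is represented by labeled triples.\<close>
definition under_V ::
  "'e set \<Rightarrow> ('e \<Rightarrow> 'v) \<Rightarrow> ('e \<Rightarrow> 'v) \<Rightarrow> ('e \<Rightarrow> 'a) \<Rightarrow> 'v set set" where
  "under_V E s t L = {past_set E s t L y | y. y \<in> presented_shift E s t L}"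

definition under_E ::
  "'e set \<Rightarrow> ('e \<Rightarrow> 'v) \<Rightarrow> ('e \<Rightarrow> 'v) \<Rightarrow> ('e \<Rightarrow> 'a) \<Rightarrow> ('v set \<times> 'a \<times> 'v set) set" where
  "under_E E s t L = {(D, a, follower E s t L D a) | D a.
      D \<in> under_V E s t L \<and> follower E s t L D a \<noteq> {}}"

definition right_labels :: "('w \<times> 'a \<times> 'w) set \<Rightarrow> 'w \<Rightarrow> (nat \<Rightarrow> 'a) set" where
  "right_labels EH v = {w. \<exists>p. p 0 = v \<and> (\<forall>n. (p n, w n, p (Suc n)) \<in> EH)}"

definition merged_V :: "'w set \<Rightarrow> ('w \<times> 'a \<times> 'w) set \<Rightarrow> (nat \<Rightarrow> 'a) set set" where
  "merged_V VH EH = right_labels EH ` VH"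

definition merged_E :: "'w set \<Rightarrow> ('w \<times> 'a \<times> 'w) set \<Rightarrow>
    ((nat \<Rightarrow> 'a) set \<times> 'a \<times> (nat \<Rightarrow> 'a) set) set" where
  "merged_E VH EH = {(right_labels EH v, a, right_labels EH w) | v a w.
      v \<in> VH \<and> w \<in> VH \<and> (v, a, w) \<in> EH}"

definition right_part :: "(int \<Rightarrow> 'a) set \<Rightarrow> (nat \<Rightarrow> 'a) set" where
  "right_part Y = {(\<lambda>n. y (int n)) | y. y \<in> Y}"

definition glue :: "(int \<Rightarrow> 'a) \<Rightarrow> (nat \<Rightarrow> 'a) \<Rightarrow> (int \<Rightarrow> 'a)" where
  "glue y w = (\<lambda>i. if i < 0 then y i else w (nat i))"

definition future :: "(int \<Rightarrow> 'a) set \<Rightarrow> (int \<Rightarrow> 'a) \<Rightarrow> (nat \<Rightarrow> 'a) set" where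
  "future Y y = {w. w \<in> right_part Y \<and> glue y w \<in> Y}"

definition fcover_V :: "(int \<Rightarrow> 'a) set \<Rightarrow> (nat \<Rightarrow> 'a) set set" where
  "fcover_V Y = future Y ` Y"

definition fcover_E :: "(int \<Rightarrow> 'a) set \<Rightarrow> ((nat \<Rightarrow> 'a) set \<times> 'a \<times> (nat \<Rightarrow> 'a) set) set" where
  "fcover_E Y = {(future Y y, a, future Y z) | y a z. y \<in> Y \<and> z \<in> Y \<and>
      future Y z = {w. case_nat a w \<in> future Y y}}"

end

theory Submission
  imports Defs
begin

(* For y in Y, a right-infinite word w lies in F(y) iff some vertex of D^y starts a path labeled w.
   In a finite graph, by Koenig's lemma, this happens iff all the iterated followers
   [D^y, w_0 ... w_(n-1)] are non-empty, which is exactly the condition for w to label a path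
   from D^y in underline G, since the vertices of underline G are closed under taking non-empty
   followers.  Hence F(y) = f(D^y) as sets of words, the isomorphism is the identity, and the
   edge relations agree because both are governed by F(z) = {w. a w in F(y)}. *)

lemma finite_ex_forall_nat:
  assumes "finite S" and "\<And>x n. P x (Suc n) \<Longrightarrow> P x n" and "\<And>n. \<exists>x\<in>S. P x n"
  shows "\<exists>x\<in>S. \<forall>n. P x n"
proof (rule ccontr)
  assume "\<not> ?thesis"
  then obtain f where f: "\<forall>x\<in>S. \<not> P x (f x)" by metis
  have mono: "P x (n + k) \<Longrightarrow> P x n" for x n k
    by (induction k) (auto intro: assms(2))
  obtain x where x: "x \<in> S" "P x (Max (f ` S))" using assms(3) by blast
  moreover have "f x \<le> Max (f ` S)" using x assms(1) by simp
  ultimately have "P x (f x)" using mono by (metis le_Suc_ex)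
  with f x show False by blast
qed

lemma future_eq: "future Y y = {w. glue y w \<in> Y}"
proof -
  have "w \<in> right_part Y" if "glue y w \<in> Y" for w
  proof -
    have "w = (\<lambda>n. glue y w (int n))" by (simp add: glue_def)
    with that show ?thesis unfolding right_part_def by blast
  qed
  then show ?thesis unfolding future_def by blast
qed

lemma right_part_in_future:
  assumes "y \<in> Y" shows "(\<lambda>n. y (int n)) \<in> future Y y"
proof -
  have "glue y (\<lambda>n. y (int n)) = y" by (simp add: glue_def fun_eq_iff)
  with assms show ?thesis by (simp add: future_eq)
qed

lemma past_set_glue: "past_set E s t L (glue y w) = past_set E s t L y"
  unfolding past_set_def glue_def by simp

lemma fcover_E_memI:
  "y \<in> Y \<Longrightarrow> z \<in> Y \<Longrightarrow> future Y z = {w. case_nat a w \<in> future Y y}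
    \<Longrightarrow> (future Y y, a, future Y z) \<in> fcover_E Y"
  unfolding fcover_E_def by blast

lemma merged_E_memI:
  "v \<in> VH \<Longrightarrow> w \<in> VH \<Longrightarrow> (v, a, w) \<in> EH
    \<Longrightarrow> (right_labels EH v, a, right_labels EH w) \<in> merged_E VH EH"
  unfolding merged_E_def by blast

locale labeled_graph =
  fixes E :: "'e set" and s t :: "'e \<Rightarrow> 'v" and L :: "'e \<Rightarrow> 'a"
begin

abbreviation shift where "shift \<equiv> presented_shift E s t L"
abbreviation past where "past \<equiv> past_set E s t L"
abbreviation fol where "fol \<equiv> follower E s t L"

definition right_path :: "(nat \<Rightarrow> 'e) \<Rightarrow> bool" where
  "right_path p \<longleftrightarrow> (\<forall>n. p n \<in> E \<and> t (p n) = s (p (Suc n)))"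

text \<open>A left-infinite path is indexed backwards: x n is the edge in position -(n+1).\<close>
definition left_path :: "(nat \<Rightarrow> 'e) \<Rightarrow> bool" where
  "left_path x \<longleftrightarrow> (\<forall>n. x n \<in> E \<and> t (x (Suc n)) = s (x n))"

definition labels_from :: "'v \<Rightarrow> (nat \<Rightarrow> 'a) set" where
  "labels_from v = {L \<circ> p | p. right_path p \<and> s (p 0) = v}"

lemma labels_fromI: "right_path p \<Longrightarrow> s (p 0) = v \<Longrightarrow> L \<circ> p \<in> labels_from v"
  unfolding labels_from_def by blast

lemma past_eq: "past y = {t (x 0) | x. left_path x \<and> (\<forall>n. L (x n) = y (- int n - 1))}"
  unfolding past_set_def left_path_def by blast

lemma past_memI:
  assumes "left_path x" and "\<And>n. L (x n) = y (- int n - 1)"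
  shows "t (x 0) \<in> past y"
  unfolding past_eq using assms by blast

lemma edge_shift_split:
  assumes "z \<in> edge_shift E s t"
  shows "left_path (\<lambda>n. z (- int n - 1))" and "right_path (\<lambda>n. z (int n))"
    and "s (z 0) = t (z (-1))"
proof -
  have zE: "z i \<in> E" and zt: "t (z i) = s (z (i + 1))" for i
    using assms unfolding edge_shift_def by auto
  have "t (z (- int (Suc n) - 1)) = s (z (- int n - 1))" for n
  proof -
    have "- int (Suc n) - 1 + 1 = - int n - 1" by simp
    then show ?thesis using zt[of "- int (Suc n) - 1"] by metis
  qed
  with zE show "left_path (\<lambda>n. z (- int n - 1))" unfolding left_path_def by simp
  have "t (z (int n)) = s (z (int (Suc n)))" for n
    using zt[of "int n"] by (simp add: add.commute)
  with zE show "right_path (\<lambda>n. z (int n))" unfolding right_path_def by simp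
  show "s (z 0) = t (z (-1))" using zt[of "-1"] by simp
qed

lemma edge_shift_concat:
  assumes "left_path x" and "right_path p" and "s (p 0) = t (x 0)"
  shows "(\<lambda>i. if i < 0 then x (nat (- i - 1)) else p (nat i)) \<in> edge_shift E s t"
  unfolding edge_shift_def
proof (intro CollectI conjI allI)
  fix i :: int
  show "(if i < 0 then x (nat (- i - 1)) else p (nat i)) \<in> E"
    using assms unfolding left_path_def right_path_def by simp
  consider "i < -1" | "i = -1" | "i \<ge> 0" by linarith
  then show "t (if i < 0 then x (nat (- i - 1)) else p (nat i))
      = s (if i + 1 < 0 then x (nat (- (i + 1) - 1)) else p (nat (i + 1)))"
  proof cases
    case 1
    then have "nat (- i - 1) = Suc (nat (- (i + 1) - 1))" by simp
    with 1 assms(1) show ?thesis unfolding left_path_def by simp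
  next
    case 2
    with assms(3) show ?thesis by simp
  next
    case 3
    then have "nat (i + 1) = Suc (nat i)" by simp
    with 3 assms(2) show ?thesis unfolding right_path_def by simp
  qed
qed

lemma edge_shift_past: "z \<in> edge_shift E s t \<Longrightarrow> t (z (-1)) \<in> past (L \<circ> z)"
  using past_memI[OF edge_shift_split(1)] by simp

lemma past_nonempty: "y \<in> shift \<Longrightarrow> past y \<noteq> {}"
  unfolding presented_shift_def using edge_shift_past by blast

lemma glue_in_shift_iff: "glue y w \<in> shift \<longleftrightarrow> (\<exists>v\<in>past y. w \<in> labels_from v)"
proof
  assume "glue y w \<in> shift"
  then obtain z where z: "z \<in> edge_shift E s t" "glue y w = L \<circ> z"
    unfolding presented_shift_def by blast
  have "t (z (-1)) \<in> past y"
    using edge_shift_past[OF z(1)] past_set_glue[of E s t L y w] z(2) by simp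
  moreover have w_eq: "w = L \<circ> (\<lambda>n. z (int n))"
  proof
    fix n
    have "w n = glue y w (int n)" by (simp add: glue_def)
    with z(2) show "w n = (L \<circ> (\<lambda>n. z (int n))) n" by simp
  qed
  moreover from w_eq have "w \<in> labels_from (t (z (-1)))"
    using labels_fromI edge_shift_split(2,3)[OF z(1)] by simp
  ultimately show "\<exists>v\<in>past y. w \<in> labels_from v" by blast
next
  assume "\<exists>v\<in>past y. w \<in> labels_from v"
  then obtain x p where x: "left_path x" "\<forall>n. L (x n) = y (- int n - 1)"
    and p: "right_path p" "s (p 0) = t (x 0)" "w = L \<circ> p"
    unfolding past_eq labels_from_def by blast
  let ?z = "\<lambda>i. if i < 0 then x (nat (- i - 1)) else p (nat i)"
  have "glue y w = L \<circ> ?z"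
  proof
    fix i :: int
    show "glue y w i = (L \<circ> ?z) i"
    proof (cases "i < 0")
      case True
      then have "- int (nat (- i - 1)) - 1 = i" by simp
      then have "y i = L (x (nat (- i - 1)))" using x(2) by metis
      with True show ?thesis by (simp add: glue_def)
    next
      case False
      with p(3) show ?thesis by (simp add: glue_def)
    qed
  qed
  with edge_shift_concat[OF x(1) p(1,2)] show "glue y w \<in> shift"
    unfolding presented_shift_def by blast
qed

lemma past_Cons:
  assumes "y' (-1) = a" and "\<And>i. i < 0 \<Longrightarrow> y' (i - 1) = y i"
  shows "past y' = fol (past y) a"
proof
  have y': "y' (- int (Suc n) - 1) = y (- int n - 1)" for n
    using assms(2)[of "- int n - 1"] by (simp add: algebra_simps)
  show "past y' \<subseteq> fol (past y) a"
  proof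
    fix u assume "u \<in> past y'"
    then obtain x where x: "left_path x" "\<forall>n. L (x n) = y' (- int n - 1)" "u = t (x 0)"
      unfolding past_eq by blast
    have "left_path (x \<circ> Suc)" using x(1) unfolding left_path_def by simp
    moreover have "\<forall>n. L ((x \<circ> Suc) n) = y (- int n - 1)" using x(2) y' by simp
    ultimately have "t (x (Suc 0)) \<in> past y" using past_memI by fastforce
    moreover have "t (x (Suc 0)) = s (x 0)" "x 0 \<in> E" "L (x 0) = a"
      using x(1,2) assms(1) unfolding left_path_def by auto
    ultimately show "u \<in> fol (past y) a" unfolding follower_def using x(3) by force
  qed
  show "fol (past y) a \<subseteq> past y'"
  proof
    fix u assume "u \<in> fol (past y) a"
    then obtain e x where e: "e \<in> E" "L e = a" "u = t e" "s e = t (x 0)"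
      and x: "left_path x" "\<forall>n. L (x n) = y (- int n - 1)"
      unfolding follower_def past_eq by blast
    have "left_path (case_nat e x)"
      using e x(1) unfolding left_path_def by (auto split: nat.split)
    moreover have "\<forall>n. L (case_nat e x n) = y' (- int n - 1)"
      using e(2) x(2) y' assms(1) by (auto split: nat.split)
    ultimately show "u \<in> past y'" using past_memI e(3) by fastforce
  qed
qed

primrec follow :: "'v set \<Rightarrow> (nat \<Rightarrow> 'a) \<Rightarrow> nat \<Rightarrow> 'v set" where
  "follow D w 0 = D"
| "follow D w (Suc n) = fol (follow D w n) (w n)"

lemma follow_Suc_shift: "follow D w (Suc n) = follow (fol D (w 0)) (w \<circ> Suc) n"
  by (induction n) auto

lemma follow_UN: "follow D w n = (\<Union>v\<in>D. follow {v} w n)"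
  by (induction n) (auto simp: follower_def)

lemma follow_nonempty_Suc: "follow D w (Suc n) \<noteq> {} \<Longrightarrow> follow D w n \<noteq> {}"
  by (auto simp: follower_def)

lemma labels_from_follow_nonempty:
  assumes "w \<in> labels_from v" and "v \<in> D"
  shows "follow D w n \<noteq> {}"
proof -
  obtain p where p: "right_path p" "s (p 0) = v" "w = L \<circ> p"
    using assms(1) unfolding labels_from_def by blast
  have "s (p n) \<in> follow D w n"
  proof (induction n)
    case 0
    with p(2) assms(2) show ?case by simp
  next
    case (Suc n)
    have "p n \<in> E" "L (p n) = w n" "s (p (Suc n)) = t (p n)"
      using p unfolding right_path_def by auto
    with Suc show ?case by (force simp: follower_def)
  qed
  then show ?thesis by blast
qed

lemma labels_from_coinduct:
  assumes "Q v w" and step: "\<And>v w. Q v w \<Longrightarrow> \<exists>e\<in>E. s e = v \<and> L e = w 0 \<and> Q (t e) (w \<circ> Suc)"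
  shows "w \<in> labels_from v"
proof -
  let ?P = "\<lambda>n e. e \<in> E \<and> L e = w n \<and> Q (t e) (\<lambda>k. w (Suc n + k)) \<and> (n = 0 \<longrightarrow> s e = v)"
  have "\<exists>p. \<forall>n. ?P n (p n) \<and> t (p n) = s (p (Suc n))"
  proof (rule dependent_nat_choice)
    show "\<exists>e. ?P 0 e" using step[OF assms(1)] by (auto simp: comp_def)
    show "\<exists>e'. ?P (Suc n) e' \<and> t e = s e'" if "?P n e" for e n
      using step[of "t e" "\<lambda>k. w (Suc n + k)"] that by (auto simp: comp_def)
  qed
  then obtain p where p: "\<forall>n. ?P n (p n) \<and> t (p n) = s (p (Suc n))" by blast
  then have "right_path p" "s (p 0) = v" "w = L \<circ> p"
    unfolding right_path_def fun_eq_iff by simp_all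
  then show ?thesis using labels_fromI by simp
qed

end

locale finite_labeled_graph = labeled_graph E s t L
  for E :: "'e set" and s t :: "'e \<Rightarrow> 'v" and L :: "'e \<Rightarrow> 'a" +
  fixes V :: "'v set"
  assumes finite_V: "finite V" and endpoints: "\<forall>e\<in>E. s e \<in> V \<and> t e \<in> V"
    and no_sinks: "\<forall>v\<in>V. \<exists>e\<in>E. s e = v"
begin

abbreviation UV where "UV \<equiv> under_V E s t L"
abbreviation UE where "UE \<equiv> under_E E s t L"

lemma finite_fol: "finite (fol D a)"
  by (rule finite_subset[OF _ finite_V]) (use endpoints in \<open>auto simp: follower_def\<close>)

lemma past_subset: "past y \<subseteq> V"
  using endpoints unfolding past_set_def by auto

lemma ex_right_path: assumes "v \<in> V" shows "\<exists>p. right_path p \<and> s (p 0) = v"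
proof -
  let ?P = "\<lambda>n e. e \<in> E \<and> (n = 0 \<longrightarrow> s e = v)"
  have "\<exists>p. \<forall>n. ?P n (p n) \<and> t (p n) = s (p (Suc n))"
  proof (rule dependent_nat_choice)
    show "\<exists>e. ?P 0 e" using assms no_sinks by auto
    show "\<exists>e'. ?P (Suc n) e' \<and> t e = s e'" if "?P n e" for n e
    proof -
      have "t e \<in> V" using that endpoints by simp
      then obtain e' where "e' \<in> E" "s e' = t e" using no_sinks by blast
      then show ?thesis by auto
    qed
  qed
  then obtain p where "\<forall>n. ?P n (p n) \<and> t (p n) = s (p (Suc n))" by blast
  then have "right_path p" "s (p 0) = v" unfolding right_path_def by simp_all
  then show ?thesis by blast
qed

lemma follow_nonempty_step:
  assumes "\<forall>n. follow {v} w n \<noteq> {}"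
  shows "\<exists>e\<in>E. s e = v \<and> L e = w 0 \<and> (\<forall>n. follow {t e} (w \<circ> Suc) n \<noteq> {})"
proof -
  have "\<exists>u\<in>fol {v} (w 0). \<forall>n. follow {u} (w \<circ> Suc) n \<noteq> {}"
  proof (rule finite_ex_forall_nat[OF finite_fol])
    show "follow {u} (w \<circ> Suc) n \<noteq> {}" if "follow {u} (w \<circ> Suc) (Suc n) \<noteq> {}" for u n
      using follow_nonempty_Suc[OF that] .
    show "\<exists>u\<in>fol {v} (w 0). follow {u} (w \<circ> Suc) n \<noteq> {}" for n
    proof -
      have "follow (fol {v} (w 0)) (w \<circ> Suc) n \<noteq> {}"
        using assms follow_Suc_shift[of "{v}" w n] by metis
      then show ?thesis unfolding follow_UN[of "fol {v} (w 0)"] by blast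
    qed
  qed
  then obtain e where "e \<in> E" "s e = v" "L e = w 0" "\<forall>n. follow {t e} (w \<circ> Suc) n \<noteq> {}"
    unfolding follower_def by blast
  then show ?thesis by blast
qed

lemma follow_nonempty_iff:
  assumes "D \<subseteq> V"
  shows "(\<forall>n. follow D w n \<noteq> {}) \<longleftrightarrow> (\<exists>v\<in>D. w \<in> labels_from v)"
proof
  assume "\<forall>n. follow D w n \<noteq> {}"
  then have "\<exists>v\<in>D. \<forall>n. follow {v} w n \<noteq> {}"
  proof (intro finite_ex_forall_nat[OF finite_subset[OF assms finite_V]])
    show "follow {v} w n \<noteq> {}" if "follow {v} w (Suc n) \<noteq> {}" for v n
      using follow_nonempty_Suc[OF that] .
    show "\<exists>v\<in>D. follow {v} w n \<noteq> {}" if "\<forall>n. follow D w n \<noteq> {}" for n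
      using that[rule_format, of n] unfolding follow_UN[of D w n] by blast
  qed
  then show "\<exists>v\<in>D. w \<in> labels_from v"
    using labels_from_coinduct[where Q = "\<lambda>v w. \<forall>n. follow {v} w n \<noteq> {}"]
      follow_nonempty_step by blast
qed (use labels_from_follow_nonempty in blast)

lemma under_V_eq: "UV = past ` shift"
  unfolding under_V_def by auto

lemma under_V_fol:
  assumes "D \<in> UV" and "fol D a \<noteq> {}"
  shows "fol D a \<in> UV"
proof -
  obtain y where y: "y \<in> shift" "D = past y" using assms(1) under_V_eq by auto
  obtain e where e: "e \<in> E" "s e \<in> D" "L e = a" using assms(2) unfolding follower_def by blast
  obtain q where q: "right_path q" "s (q 0) = t e"
    using ex_right_path endpoints e(1) by blast
  define y' where "y' i = (if i = -1 then a else y (i + 1))" for i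
  have past_y': "past y' = fol D a" using past_Cons[of y' a y] y(2) by (simp add: y'_def)
  have "t e \<in> fol D a" using e unfolding follower_def by blast
  moreover have "L \<circ> q \<in> labels_from (t e)" using labels_fromI q by blast
  ultimately have "glue y' (L \<circ> q) \<in> shift" using glue_in_shift_iff past_y' by blast
  then show ?thesis using past_y' past_set_glue under_V_eq by (metis image_eqI)
qed

lemma right_labels_under_eq:
  assumes "D \<in> UV"
  shows "right_labels UE D = {w. \<forall>n. follow D w n \<noteq> {}}"
proof (intro set_eqI iffI; simp)
  fix w assume "w \<in> right_labels UE D"
  then obtain P where P: "P 0 = D" "\<forall>n. (P n, w n, P (Suc n)) \<in> UE"
    unfolding right_labels_def by blast
  then have "P n \<in> UV \<and> P (Suc n) = fol (P n) (w n)" for n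
    unfolding under_E_def by blast
  moreover from this have "P n = follow D w n" for n
    by (induction n) (simp_all add: P(1))
  ultimately show "\<forall>n. follow D w n \<noteq> {}"
    using under_V_eq past_nonempty by fastforce
next
  fix w assume w: "\<forall>n. follow D w n \<noteq> {}"
  have "follow D w n \<in> UV" for n
  proof (induction n)
    case (Suc n)
    have "fol (follow D w n) (w n) \<noteq> {}" using w by (metis follow.simps(2))
    with Suc under_V_fol show ?case by simp
  qed (use assms in simp)
  then have "(follow D w n, w n, follow D w (Suc n)) \<in> UE" for n
    using w[rule_format, of "Suc n"] unfolding under_E_def by auto
  then show "w \<in> right_labels UE D"
    unfolding right_labels_def by (intro CollectI exI[of _ "follow D w"]) simp
qed

theorem future_eq_right_labels_past:
  assumes "y \<in> shift"
  shows "future shift y = right_labels UE (past y)"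
proof -
  have "future shift y = {w. \<exists>v\<in>past y. w \<in> labels_from v}"
    by (simp add: future_eq glue_in_shift_iff)
  also have "\<dots> = {w. \<forall>n. follow (past y) w n \<noteq> {}}"
    by (simp add: follow_nonempty_iff[OF past_subset])
  also have "\<dots> = right_labels UE (past y)"
    using right_labels_under_eq under_V_eq assms by simp
  finally show ?thesis .
qed

lemma right_labels_fol:
  assumes "D \<in> UV" and "fol D a \<noteq> {}"
  shows "right_labels UE (fol D a) = {w. case_nat a w \<in> right_labels UE D}"
proof -
  have Suc_eq: "follow D (case_nat a w) (Suc n) = follow (fol D a) w n" for w n
    using follow_Suc_shift[of D "case_nat a w" n] by (simp add: comp_def)
  have "D \<noteq> {}" using assms(1) under_V_eq past_nonempty by auto
  then have "(\<forall>n. follow (fol D a) w n \<noteq> {}) \<longleftrightarrow> (\<forall>n. follow D (case_nat a w) n \<noteq> {})" for w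
    unfolding Suc_eq[symmetric] by (metis follow.simps(1) not0_implies_Suc)
  then show ?thesis
    using right_labels_under_eq assms under_V_fol by simp
qed

lemma fcover_V_eq_merged_V: "fcover_V shift = merged_V UV UE"
  unfolding fcover_V_def merged_V_def under_V_eq image_image
  using future_eq_right_labels_past by (intro image_cong) auto

lemma fcover_E_iff_merged_E:
  assumes P: "P \<in> fcover_V shift" and Q: "Q \<in> fcover_V shift"
  shows "(P, a, Q) \<in> fcover_E shift \<longleftrightarrow> (P, a, Q) \<in> merged_E UV UE"
proof
  assume "(P, a, Q) \<in> fcover_E shift"
  then obtain y z where yz: "y \<in> shift" "z \<in> shift" "P = future shift y" "Q = future shift z"
    and Q_eq: "Q = {w. case_nat a w \<in> P}"
    unfolding fcover_E_def by blast
  let ?D = "past y"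
  have D: "?D \<in> UV" and P_eq: "P = right_labels UE ?D"
    using yz future_eq_right_labels_past under_V_eq by auto
  obtain w where "case_nat a w \<in> right_labels UE ?D"
    using right_part_in_future[OF yz(2)] yz(4) Q_eq P_eq by blast
  then have "follow ?D (case_nat a w) (Suc 0) \<noteq> {}"
    using right_labels_under_eq[OF D] by blast
  then have ne: "fol ?D a \<noteq> {}" by simp
  have "(?D, a, fol ?D a) \<in> UE" unfolding under_E_def using D ne by blast
  moreover have "Q = right_labels UE (fol ?D a)" using right_labels_fol[OF D ne] Q_eq P_eq by simp
  ultimately show "(P, a, Q) \<in> merged_E UV UE"
    using merged_E_memI D under_V_fol[OF D ne] P_eq by metis
next
  assume "(P, a, Q) \<in> merged_E UV UE"
  then obtain D D' where D: "D \<in> UV" "(D, a, D') \<in> UE" "P = right_labels UE D" "Q = right_labels UE D'"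
    unfolding merged_E_def by blast
  then have "D' = fol D a" "fol D a \<noteq> {}" unfolding under_E_def by blast+
  then have "Q = {w. case_nat a w \<in> P}" using right_labels_fol D by simp
  moreover obtain y z where "y \<in> shift" "P = future shift y" "z \<in> shift" "Q = future shift z"
    using P Q unfolding fcover_V_def by blast
  ultimately show "(P, a, Q) \<in> fcover_E shift" using fcover_E_memI by metis
qed

end

theorem corollary5p5:
  fixes V :: "'v set" and E :: "'e set" and s t :: "'e \<Rightarrow> 'v" and L :: "'e \<Rightarrow> 'a"
  assumes "finite V" and "finite E"
    and "\<forall>e\<in>E. s e \<in> V \<and> t e \<in> V"
    and "\<forall>v\<in>V. \<exists>e\<in>E. s e = v"
    and "\<forall>v\<in>V. \<exists>e\<in>E. t e = v"
  defines "Y \<equiv> presented_shift E s t L"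
  shows "\<exists>\<phi>. (\<forall>y\<in>Y. \<phi> (future Y y) = right_labels (under_E E s t L) (past_set E s t L y))
     \<and> bij_betw \<phi> (fcover_V Y) (merged_V (under_V E s t L) (under_E E s t L))
     \<and> (\<forall>P\<in>fcover_V Y. \<forall>Q\<in>fcover_V Y. \<forall>a.
          (P, a, Q) \<in> fcover_E Y \<longleftrightarrow>
          (\<phi> P, a, \<phi> Q) \<in> merged_E (under_V E s t L) (under_E E s t L))"
proof -
  interpret finite_labeled_graph E s t L V
    using assms(1,3,4) by unfold_locales
  show ?thesis unfolding Y_def
    using future_eq_right_labels_past fcover_V_eq_merged_V fcover_E_iff_merged_E
    by (intro exI[of _ id]) simp
qed

end
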